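(* Let $f:\mathbb{R}^{d-1}\to\mathbb{R}\cup\{+\infty\}$ be a convex function which is finite and $\mathcal{C}^2$ in a neighborhood of $0$, with $f(0)=0$, $Df(0)=0$ and $D^2f(0)=2\,\mathrm{Id}$ (so $f(x')=\|x'\|^2+o(\|x'\|^2)$ as $x'\to0$). Then for every $\varepsilon>0$ there exists $r>0$ such that $f(x')\ge\tilde f(x')$ for all $x'\in\mathbb{R}^{d-1}$, where $\tilde f(x')=(1-\varepsilon)\|x'\|^2$ if $\|x'\|\le r$, and $\tilde f(x')=(1-\varepsilon)\,r\,(2\|x'\|-r)$ if $\|x'\|\ge r$.
   Context: In the paper, $f$ is the function such that a convex domain $D\subset\mathbb{R}^d$ is given (after an affine change of coordinates placing a boundary point at the origin with tangent hyperplane $\{x_1=0\}$) by $\{(x_1,x'):x_1+f(x')<0\}$, $x'=(x_2,\dots,x_d)$; $\|\cdot\|$ is the Euclidean norm. *)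

theory Defs
  imports "HOL-Analysis.Analysis"
begin

text \<open>Convexity of an extended-real-valued function with values in \<open>\<real> \<union> {+\<infinity>}\<close>
  (the value \<open>-\<infinity>\<close> is excluded separately). Note \<open>0 * \<infinity> = 0\<close> in \<open>ereal\<close>.\<close>
definition ereal_convex :: "('a::real_vector \<Rightarrow> ereal) \<Rightarrow> bool" where
  "ereal_convex f \<longleftrightarrow>
     (\<forall>x y. \<forall>t::real. 0 \<le> t \<and> t \<le> 1 \<longrightarrow>
        f ((1 - t) *\<^sub>R x + t *\<^sub>R y) \<le> ereal (1 - t) * f x + ereal t * f y)"

definition ftilde :: "real \<Rightarrow> real \<Rightarrow> 'a::real_normed_vector \<Rightarrow> real" where
  "ftilde \<epsilon> r x = (if norm x \<le> r then (1 - \<epsilon>) * (norm x)\<^sup>2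
                    else (1 - \<epsilon>) * r * (2 * norm x - r))"

end

theory Submission
  imports Defs
begin

text \<open>Near 0 the gradient satisfies \<open>Df y y \<ge> 2(1 - \<epsilon>)\<parallel>y\<parallel>\<^sup>2\<close>, because \<open>Df\<close> is
  differentiable at 0 with \<open>Df 0 = 0\<close> and Hessian \<open>2 Id\<close>. Integrating along rays gives
  \<open>f y \<ge> (1 - \<epsilon>)\<parallel>y\<parallel>\<^sup>2\<close> on a ball of radius \<open>r\<close>. Outside the ball, convexity puts \<open>f\<close> above
  its tangent plane at the point \<open>y\<close> of the sphere in the direction of \<open>x\<close>, and along that
  ray the tangent plane grows at least like \<open>(1 - \<epsilon>) r (2\<parallel>x\<parallel> - r)\<close>. Only the
  differentiability of \<open>Df\<close> at 0 enters.\<close>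

lemma has_real_derivative_along_line:
  fixes F :: "'a::real_normed_vector \<Rightarrow> real"
  assumes "(F has_derivative L) (at (y + t *\<^sub>R v))"
  shows "((\<lambda>s. F (y + s *\<^sub>R v)) has_real_derivative L v) (at t)"
proof -
  have "((\<lambda>s. y + s *\<^sub>R v) has_derivative (\<lambda>s. s *\<^sub>R v)) (at t)"
    by (auto intro!: derivative_eq_intros)
  from diff_chain_at[OF this assms]
  have "((\<lambda>s. F (y + s *\<^sub>R v)) has_derivative (\<lambda>s. s * L v)) (at t)"
    using has_derivative_bounded_linear[OF assms]
    by (simp add: o_def linear_simps)
  then show ?thesis
    by (rule has_derivative_imp_has_field_derivative) simp
qed

lemma right_derivative_le_chord_slope:
  fixes g :: "real \<Rightarrow> real"
  assumes chord: "\<And>t. 0 < t \<Longrightarrow> t < 1 \<Longrightarrow> g t \<le> (1 - t) * g 0 + t * g 1"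
    and deriv: "(g has_real_derivative g') (at 0)"
  shows "g' \<le> g 1 - g 0"
proof -
  have "((\<lambda>t. (g t - g 0) / (t - 0)) \<longlongrightarrow> g') (at_right 0)"
    using has_field_derivative_at_within[OF deriv] unfolding has_field_derivative_iff .
  moreover have "\<forall>\<^sub>F t in at_right 0. (g t - g 0) / (t - 0) \<le> g 1 - g 0"
    unfolding eventually_at_right_field
  proof (intro exI[of _ 1] conjI allI impI)
    fix t :: real
    assume t: "0 < t" "t < 1"
    with chord[of t] have "g t - g 0 \<le> t * (g 1 - g 0)"
      by (simp add: algebra_simps)
    with t show "(g t - g 0) / (t - 0) \<le> g 1 - g 0"
      by (simp add: divide_le_eq mult.commute)
  qed simp
  ultimately show ?thesis
    by (simp add: tendsto_upperbound)
qed

lemma ereal_convex_above_tangent: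
  fixes f :: "'a::real_normed_vector \<Rightarrow> ereal"
  assumes conv: "ereal_convex f"
    and no_minf: "\<forall>x. f x \<noteq> -\<infinity>"
    and fy: "f y \<noteq> \<infinity>"
    and deriv: "((\<lambda>z. real_of_ereal (f z)) has_derivative L) (at y)"
  shows "f x \<ge> ereal (real_of_ereal (f y) + L (x - y))"
proof (cases "f x = \<infinity>")
  case False
  \<comment> \<open>Naming \<open>F\<close> keeps the simplifier from looping on \<open>f z = ereal (real_of_ereal (f z))\<close>.\<close>
  define F where "F z = real_of_ereal (f z)" for z
  have f_eq_F: "f z = ereal (F z)" if "f z \<noteq> \<infinity>" for z
    using that no_minf unfolding F_def by (cases "f z") auto
  define g where "g t = F (y + t *\<^sub>R (x - y))" for t
  have "L (x - y) \<le> g 1 - g 0"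
  proof (rule right_derivative_le_chord_slope)
    fix t :: real
    assume t: "0 < t" "t < 1"
    have "y + t *\<^sub>R (x - y) = (1 - t) *\<^sub>R y + t *\<^sub>R x"
      by (simp add: algebra_simps)
    with conv t have "f (y + t *\<^sub>R (x - y)) \<le> ereal (1 - t) * f y + ereal t * f x"
      unfolding ereal_convex_def by simp
    also have "\<dots> = ereal ((1 - t) * g 0 + t * g 1)"
      using f_eq_F[OF fy] f_eq_F[OF False] by (simp add: g_def)
    finally show "g t \<le> (1 - t) * g 0 + t * g 1"
      using no_minf unfolding g_def F_def by (cases "f (y + t *\<^sub>R (x - y))") auto
  next
    show "(g has_real_derivative L (x - y)) (at 0)"
      using has_real_derivative_along_line[of F L y 0 "x - y"] deriv
      unfolding g_def F_def by simp
  qed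
  then show ?thesis
    using f_eq_F[OF False] unfolding F_def[symmetric] by (simp add: g_def)
qed simp

lemma radial_derivative_lower_bound:
  fixes Df :: "'a::real_normed_vector \<Rightarrow> ('a \<Rightarrow>\<^sub>L real)"
  assumes deriv: "(Df has_derivative blinfun_apply H) (at 0)"
    and Df0: "Df 0 = 0"
    and hessian: "\<And>h. c * (norm h)\<^sup>2 \<le> H h h"
    and "e > 0"
  obtains r where "r > 0" and "\<And>y. norm y < r \<Longrightarrow> (c - e) * (norm y)\<^sup>2 \<le> Df y y"
proof -
  obtain r where "r > 0"
    and close: "\<And>y. norm y < r \<Longrightarrow> norm (Df y - H y) \<le> e * norm y"
    using deriv \<open>e > 0\<close> Df0 unfolding has_derivative_at_alt by force
  have "(c - e) * (norm y)\<^sup>2 \<le> Df y y" if "norm y < r" for y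
  proof -
    have "\<bar>(Df y - H y) y\<bar> \<le> norm (Df y - H y) * norm y"
      using norm_blinfun[of "Df y - H y" y] by simp
    also have "\<dots> \<le> e * (norm y)\<^sup>2"
      using mult_right_mono[OF close[OF that], of "norm y"] by (simp add: power2_eq_square)
    finally show ?thesis
      using hessian[of y] by (simp add: blinfun.diff_left algebra_simps abs_le_iff)
  qed
  with \<open>r > 0\<close> show thesis by (rule that)
qed

lemma radial_quadratic_lower_bound:
  fixes F :: "'a::real_normed_vector \<Rightarrow> real"
  assumes F0: "F 0 = 0"
    and deriv: "\<And>z. norm z < r \<Longrightarrow> (F has_derivative L z) (at z)"
    and radial: "\<And>z. norm z < r \<Longrightarrow> 2 * c * (norm z)\<^sup>2 \<le> L z z"
    and y: "norm y < r"
  shows "c * (norm y)\<^sup>2 \<le> F y"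
proof -
  have in_ball: "norm (t *\<^sub>R y) < r" if "0 \<le> t" "t \<le> 1" for t
    using that y mult_left_le_one_le[of "norm y" t] by auto
  define h where "h t = F (t *\<^sub>R y) - c * t\<^sup>2 * (norm y)\<^sup>2" for t
  define h' where "h' t = L (t *\<^sub>R y) y - c * (2 * t) * (norm y)\<^sup>2" for t
  have "(h has_real_derivative h' t) (at t)" if "0 \<le> t" "t \<le> 1" for t
    using has_real_derivative_along_line[of F "L (t *\<^sub>R y)" 0 t y] deriv[OF in_ball[OF that]]
    unfolding h_def h'_def by (auto intro!: derivative_eq_intros)
  then obtain z where z: "0 < z" "z < 1" and mvt: "h 1 - h 0 = h' z"
    using MVT2[of 0 1 h h'] by auto
  have zy: "norm (z *\<^sub>R y) < r"
    using z by (intro in_ball) auto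
  have "linear (L (z *\<^sub>R y))"
    by (rule has_derivative_linear[OF deriv[OF zy]])
  then have "z * L (z *\<^sub>R y) y = L (z *\<^sub>R y) (z *\<^sub>R y)"
    by (simp add: linear_scale)
  also have "\<dots> \<ge> z * (2 * c * z * (norm y)\<^sup>2)"
    using radial[OF zy] by (simp add: power2_eq_square algebra_simps)
  finally have "L (z *\<^sub>R y) y \<ge> 2 * c * z * (norm y)\<^sup>2"
    using z by (simp add: mult_le_cancel_left_pos)
  with mvt have "h 0 \<le> h 1"
    by (simp add: h'_def algebra_simps)
  then show ?thesis
    by (simp add: h_def F0)
qed

lemma ereal_convex_ge_ftilde:
  fixes f :: "'a::real_normed_vector \<Rightarrow> ereal" and \<epsilon> :: real
  assumes conv: "ereal_convex f"
    and no_minf: "\<forall>x. f x \<noteq> -\<infinity>"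
    and "r > 0"
    and finite_ball: "\<And>y. norm y \<le> r \<Longrightarrow> f y \<noteq> \<infinity>"
    and deriv: "\<And>y. norm y = r \<Longrightarrow> ((\<lambda>z. real_of_ereal (f z)) has_derivative L y) (at y)"
    and quadratic: "\<And>y. norm y \<le> r \<Longrightarrow> (1 - \<epsilon>) * (norm y)\<^sup>2 \<le> real_of_ereal (f y)"
    and radial: "\<And>y. norm y = r \<Longrightarrow> 2 * (1 - \<epsilon>) * r\<^sup>2 \<le> L y y"
  shows "f x \<ge> ereal (ftilde \<epsilon> r x)"
proof (cases "norm x \<le> r")
  case True
  with finite_ball no_minf obtain a where "f x = ereal a"
    by (cases "f x") auto
  with quadratic[OF True] show ?thesis
    using True by (simp add: ftilde_def)
next
  case False
  define s where "s = norm x"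
  define y where "y = (r / s) *\<^sub>R x"
  have s: "r < s" using False by (simp add: s_def)
  have ny: "norm y = r"
    using s \<open>r > 0\<close> by (auto simp: y_def s_def abs_of_pos)
  have "linear (L y)"
    using deriv[OF ny] by (rule has_derivative_linear)
  moreover have "x - y = (s / r - 1) *\<^sub>R y"
    using s \<open>r > 0\<close> by (simp add: y_def algebra_simps)
  ultimately have "L y (x - y) = (s / r - 1) * L y y"
    by (simp add: linear_scale)
  moreover have "(s / r - 1) * (2 * (1 - \<epsilon>) * r\<^sup>2) \<le> (s / r - 1) * L y y"
    using radial[OF ny] s \<open>r > 0\<close> by (intro mult_left_mono) auto
  moreover have "(1 - \<epsilon>) * r\<^sup>2 \<le> real_of_ereal (f y)"
    using quadratic[of y] ny by simp
  moreover have "ftilde \<epsilon> r x = (1 - \<epsilon>) * r\<^sup>2 + (s / r - 1) * (2 * (1 - \<epsilon>) * r\<^sup>2)"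
    using False \<open>r > 0\<close> by (simp add: ftilde_def s_def power2_eq_square field_simps)
  ultimately have "ftilde \<epsilon> r x \<le> real_of_ereal (f y) + L y (x - y)"
    by linarith
  moreover have "ereal (real_of_ereal (f y) + L y (x - y)) \<le> f x"
    using ereal_convex_above_tangent[OF conv no_minf finite_ball deriv] ny by simp
  ultimately show ?thesis
    by (meson ereal_less_eq(3) order_trans)
qed

theorem lemma1:
  fixes f :: "'a::euclidean_space \<Rightarrow> ereal"
    and U :: "'a set"
    and Df :: "'a \<Rightarrow> ('a \<Rightarrow>\<^sub>L real)"
    and D2f :: "'a \<Rightarrow> ('a \<Rightarrow>\<^sub>L ('a \<Rightarrow>\<^sub>L real))"
    and \<epsilon> :: real
  assumes conv: "ereal_convex f"
    and no_minf: "\<forall>x. f x \<noteq> -\<infinity>"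
    and U_open: "open U" and U0: "0 \<in> U"
    and finite_U: "\<forall>x\<in>U. f x \<noteq> \<infinity>"
    and D1: "\<forall>x\<in>U. ((\<lambda>y. real_of_ereal (f y)) has_derivative blinfun_apply (Df x)) (at x)"
    and D2: "\<forall>x\<in>U. (Df has_derivative blinfun_apply (D2f x)) (at x)"
    and D2_cont: "continuous_on U D2f"
    and f0: "f 0 = 0"
    and Df0: "Df 0 = 0"
    and D2f0: "\<forall>h k. blinfun_apply (blinfun_apply (D2f 0) h) k = 2 * (h \<bullet> k)"
    and eps: "\<epsilon> > 0"
  shows "\<exists>r>0. \<forall>x. f x \<ge> ereal (ftilde \<epsilon> r x)"
proof -
  obtain d where "d > 0" and ball_U: "ball 0 d \<subseteq> U"
    using U_open U0 open_contains_ball by blast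
  have "\<And>h. 2 * (norm h)\<^sup>2 \<le> D2f 0 h h"
    using D2f0 by (simp add: power2_norm_eq_inner)
  then obtain r1 where "r1 > 0"
    and radial: "\<And>y. norm y < r1 \<Longrightarrow> (2 - 2 * \<epsilon>) * (norm y)\<^sup>2 \<le> Df y y"
    using radial_derivative_lower_bound[of Df "D2f 0" 2 "2 * \<epsilon>"] D2 U0 Df0 eps by auto
  define r where "r = min d r1 / 2"
  have "r > 0" using \<open>d > 0\<close> \<open>r1 > 0\<close> by (simp add: r_def)
  have in_U: "y \<in> U" if "norm y < 2 * r" for y
    using that ball_U by (auto simp: r_def)
  have radial_2r: "2 * (1 - \<epsilon>) * (norm y)\<^sup>2 \<le> Df y y" if "norm y < 2 * r" for y
    using that radial[of y] by (simp add: r_def algebra_simps)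
  have quadratic: "(1 - \<epsilon>) * (norm y)\<^sup>2 \<le> real_of_ereal (f y)" if "norm y \<le> r" for y
  proof (rule radial_quadratic_lower_bound[where r = "2 * r" and L = Df])
    show "real_of_ereal (f 0) = 0" using f0 by simp
    show "norm y < 2 * r" using that \<open>r > 0\<close> by simp
  qed (use D1 in_U radial_2r in auto)
  have "f x \<ge> ereal (ftilde \<epsilon> r x)" for x
  proof (rule ereal_convex_ge_ftilde[OF conv no_minf \<open>r > 0\<close> _ _ quadratic])
    fix y :: 'a
    show "f y \<noteq> \<infinity>" if "norm y \<le> r"
      using that \<open>r > 0\<close> in_U finite_U by simp
    show "((\<lambda>z. real_of_ereal (f z)) has_derivative Df y) (at y)" if "norm y = r"
      using that \<open>r > 0\<close> in_U D1 by simp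
    show "2 * (1 - \<epsilon>) * r\<^sup>2 \<le> Df y y" if "norm y = r"
      using that \<open>r > 0\<close> radial_2r[of y] by simp
  qed
  with \<open>r > 0\<close> show ?thesis by blast
qed

end
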